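(* Let $i\ge 2$ and let $c_0,\dots,c_{i-1}$ be the vertices of a cycle, each with a positive weight $w(c_j)$. Run the following procedure (BalanceInCycle): initialize $b_{OPT}\gets 0$, a queue $Q_1$ empty and a queue $Q_2$ containing $c_0,c_1,\dots,c_{i-1}$ in this order (head $c_0$). Repeat the following iteration until $c_0$ becomes the head of $Q_1$ for the second time: update $b_{OPT}\gets\max\{b_{OPT},\min(w(Q_1),w(Q_2))\}$; then, if $w(Q_1)>w(Q_2)$, dequeue the head of $Q_1$ and append it to the tail of $Q_2$, otherwise dequeue the head of $Q_2$ and append it to the tail of $Q_1$. Then each vertex $c_j$ of the cycle is dequeued from $Q_1$ at least once during the procedure.
   Context: $w(Q)$ denotes the sum of the weights of the elements currently in queue $Q$. Queues are FIFO: elements are appended at the tail and removed at the head. *)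

theory Defs
  imports Complex_Main
begin

text \<open>Vertices of the cycle are c_0..c_(i-1), represented by 0..i-1.
 A queue is a list (head = first element, tail = last element).\<close>

definition qw :: "(nat \<Rightarrow> real) \<Rightarrow> nat list \<Rightarrow> real" where
  "qw w Q = sum_list (map w Q)"

text \<open>One iteration of BalanceInCycle on the state (Q1, Q2)
 (the b_OPT update does not affect the queues and is omitted).\<close>
definition bal_step :: "(nat \<Rightarrow> real) \<Rightarrow> nat list \<times> nat list \<Rightarrow> nat list \<times> nat list" where
  "bal_step w S = (case S of (Q1, Q2) \<Rightarrow>
     if qw w Q1 > qw w Q2 then (tl Q1, Q2 @ [hd Q1]) else (Q1 @ [hd Q2], tl Q2))"

text \<open>State before iteration n (iterations numbered from 0).\<close>
definition bal_state :: "(nat \<Rightarrow> real) \<Rightarrow> nat \<Rightarrow> nat \<Rightarrow> nat list \<times> nat list" where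
  "bal_state w i n = (bal_step w ^^ n) ([], [0..<i])"

definition becomes_head0 :: "(nat \<Rightarrow> real) \<Rightarrow> nat \<Rightarrow> nat \<Rightarrow> bool" where
  "becomes_head0 w i n = (let Q = fst (bal_state w i n); Q' = fst (bal_state w i (Suc n)) in
     Q' \<noteq> [] \<and> hd Q' = 0 \<and> (Q = [] \<or> hd Q \<noteq> 0))"

text \<open>Iteration t is executed iff c_0 has become head of Q1 fewer than two times
 during iterations 0..t-1.\<close>
definition executed :: "(nat \<Rightarrow> real) \<Rightarrow> nat \<Rightarrow> nat \<Rightarrow> bool" where
  "executed w i t = (card {n. n < t \<and> becomes_head0 w i n} < 2)"

definition dequeued_Q1 :: "(nat \<Rightarrow> real) \<Rightarrow> nat \<Rightarrow> nat \<Rightarrow> nat \<Rightarrow> bool" where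
  "dequeued_Q1 w i t j = (case bal_state w i t of (Q1, Q2) \<Rightarrow>
     qw w Q1 > qw w Q2 \<and> hd Q1 = j)"

end

theory Submission
  imports Defs
begin

text \<open>Q1 @ Q2 is always a rotation of the cycle: moving the head of Q2 to Q1 only shifts the
  split point, and moving the head of Q1 to the tail of Q2 rotates the cycle by one. Positive
  weights make the heavier queue nonempty, so every iteration is of one of these two kinds.
  If p iterations have dequeued from Q1 so far, then Q1 has length n - 2p after n iterations
  and its head is c_(p mod i). Since length Q1 \<le> i, p grows without bound, in steps of one;
  the iteration at which p passes from j to j + 1 dequeues c_j from Q1. While p < i, the vertex
  c_0 can become the head of Q1 only at the very first iteration (moving from Q2 into the
  empty Q1), so that iteration is still executed.\<close>

lemma nat_seq_crosses:
  fixes f :: "nat \<Rightarrow> nat"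
  assumes "\<And>n. f (Suc n) \<le> Suc (f n)" and "f 0 \<le> j" and "j < f n"
  shows "\<exists>t. f t = j \<and> f (Suc t) = Suc j"
  using assms(3)
proof (induction n)
  case 0
  with assms(2) show ?case by simp
next
  case (Suc n)
  show ?case
  proof (cases "j < f n")
    case False
    with Suc.prems assms(1)[of n] show ?thesis by (intro exI[of _ n]) simp
  qed (rule Suc.IH)
qed

lemma qw_Nil [simp]: "qw w [] = 0"
  by (simp add: qw_def)

lemma qw_nonneg: "(\<And>x. x \<in> set xs \<Longrightarrow> 0 \<le> w x) \<Longrightarrow> 0 \<le> qw w xs"
  unfolding qw_def by (rule sum_list_nonneg) auto

lemma qw_pos:
  assumes "\<And>x. x \<in> set xs \<Longrightarrow> 0 < w x" and "xs \<noteq> []"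
  shows "0 < qw w xs"
proof (cases xs)
  case (Cons x ys)
  then have "0 < w x" and "0 \<le> qw w ys"
    using assms(1) by (auto intro: qw_nonneg less_imp_le)
  then show ?thesis using Cons by (simp add: qw_def)
qed (use assms(2) in simp)

lemma heavier_part_nonempty:
  assumes pos: "\<And>x. x \<in> set ys \<Longrightarrow> 0 < w x" and "ys \<noteq> []"
  shows "qw w (drop k ys) < qw w (take k ys) \<Longrightarrow> take k ys \<noteq> []"
    and "\<not> qw w (drop k ys) < qw w (take k ys) \<Longrightarrow> drop k ys \<noteq> []"
proof -
  assume "qw w (drop k ys) < qw w (take k ys)"
  moreover have "0 \<le> qw w (drop k ys)"
    using pos by (auto intro: qw_nonneg less_imp_le dest: in_set_dropD)
  ultimately show "take k ys \<noteq> []" by (metis less_le_not_le qw_Nil)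
next
  assume "\<not> qw w (drop k ys) < qw w (take k ys)"
  with qw_pos[of ys w] pos \<open>ys \<noteq> []\<close> show "drop k ys \<noteq> []"
    by (metis append_Nil2 append_take_drop_id qw_Nil)
qed

lemma bal_step_take_drop:
  assumes pos: "\<And>x. x \<in> set ys \<Longrightarrow> 0 < w x" and "ys \<noteq> []" and "k \<le> length ys"
  shows "bal_step w (take k ys, drop k ys) =
    (if qw w (take k ys) > qw w (drop k ys)
     then (take (k - 1) (rotate1 ys), drop (k - 1) (rotate1 ys))
     else (take (Suc k) ys, drop (Suc k) ys))"
proof (cases "qw w (take k ys) > qw w (drop k ys)")
  case True
  then have "0 < k"
    using heavier_part_nonempty(1)[of ys w k] pos \<open>ys \<noteq> []\<close> by (cases k) auto
  have "tl (take k ys) = take (k - 1) (tl ys @ [hd ys])"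
    using \<open>k \<le> length ys\<close> by (simp add: tl_take)
  moreover have "drop k ys @ [hd (take k ys)] = drop (k - 1) (tl ys @ [hd ys])"
    using \<open>0 < k\<close> \<open>k \<le> length ys\<close> by (cases k) (simp_all add: drop_Suc)
  ultimately show ?thesis
    using True \<open>ys \<noteq> []\<close> by (simp add: bal_step_def rotate1_hd_tl)
next
  case False
  then have "k < length ys"
    using heavier_part_nonempty(2)[of ys w k] pos \<open>ys \<noteq> []\<close> by simp
  then show ?thesis
    using False by (simp add: bal_step_def take_Suc_conv_app_nth hd_drop_conv_nth drop_Suc tl_drop)
qed

lemma bal_state_Suc: "bal_state w i (Suc n) = bal_step w (bal_state w i n)"
  by (simp add: bal_state_def)

definition Q1_heavier :: "(nat \<Rightarrow> real) \<Rightarrow> nat \<Rightarrow> nat \<Rightarrow> bool" where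
  "Q1_heavier w i n = (case bal_state w i n of (Q1, Q2) \<Rightarrow> qw w Q1 > qw w Q2)"

fun Q1_pops :: "(nat \<Rightarrow> real) \<Rightarrow> nat \<Rightarrow> nat \<Rightarrow> nat" where
  "Q1_pops w i 0 = 0"
| "Q1_pops w i (Suc n) = (if Q1_heavier w i n then Suc (Q1_pops w i n) else Q1_pops w i n)"

lemma mono_Q1_pops: "mono (Q1_pops w i)"
  unfolding mono_iff_le_Suc by simp

context
  fixes w :: "nat \<Rightarrow> real" and i :: nat
  assumes i_pos: "0 < i" and w_pos: "\<And>j. j < i \<Longrightarrow> 0 < w j"
begin

lemma bal_state_rotation:
  "\<exists>k \<le> i. k + 2 * Q1_pops w i n = n \<and>
     bal_state w i n = (take k (rotate (Q1_pops w i n) [0..<i]),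
                        drop k (rotate (Q1_pops w i n) [0..<i]))"
proof (induction n)
  case 0
  show ?case by (simp add: bal_state_def)
next
  case (Suc n)
  define ys where "ys = rotate (Q1_pops w i n) [0..<i]"
  obtain k where "k \<le> i" and k_pops: "k + 2 * Q1_pops w i n = n"
    and state: "bal_state w i n = (take k ys, drop k ys)"
    using Suc.IH unfolding ys_def by blast
  have "ys \<noteq> []" and "length ys = i" and pos: "\<And>x. x \<in> set ys \<Longrightarrow> 0 < w x"
    using i_pos w_pos by (auto simp: ys_def)
  then have step: "bal_state w i (Suc n) =
    (if Q1_heavier w i n then (take (k - 1) (rotate1 ys), drop (k - 1) (rotate1 ys))
     else (take (Suc k) ys, drop (Suc k) ys))"
    using \<open>k \<le> i\<close> bal_step_take_drop[of ys w k] pos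
    by (simp add: bal_state_Suc Q1_heavier_def state)
  show ?case
  proof (cases "Q1_heavier w i n")
    case True
    then have "0 < k"
      using heavier_part_nonempty(1)[of ys w k] pos \<open>ys \<noteq> []\<close>
      by (cases k) (auto simp: Q1_heavier_def state)
    with True step k_pops \<open>k \<le> i\<close> show ?thesis
      by (intro exI[of _ "k - 1"]) (simp add: ys_def)
  next
    case False
    then have "k < length ys"
      using heavier_part_nonempty(2)[of ys w k] pos \<open>ys \<noteq> []\<close>
      by (auto simp: Q1_heavier_def state)
    with False step k_pops \<open>length ys = i\<close> show ?thesis
      by (intro exI[of _ "Suc k"]) (simp add: ys_def)
  qed
qed

lemma length_Q1: "length (fst (bal_state w i n)) + 2 * Q1_pops w i n = n"
  using bal_state_rotation[of n] by auto

lemma Q1_pops_lower_bound: "n \<le> i + 2 * Q1_pops w i n"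
  using bal_state_rotation[of n] by auto

lemma hd_Q1:
  assumes "fst (bal_state w i n) \<noteq> []"
  shows "hd (fst (bal_state w i n)) = Q1_pops w i n mod i"
proof -
  obtain k where "bal_state w i n = (take k (rotate (Q1_pops w i n) [0..<i]),
                                     drop k (rotate (Q1_pops w i n) [0..<i]))"
    using bal_state_rotation[of n] by blast
  with assms i_pos show ?thesis by (simp add: hd_rotate_conv_nth)
qed

lemma dequeued_Q1_at_pop:
  assumes "Q1_pops w i (Suc t) = Suc (Q1_pops w i t)"
  shows "dequeued_Q1 w i t (Q1_pops w i t mod i)"
proof -
  have "Q1_heavier w i t" using assms by (auto split: if_splits)
  moreover have "fst (bal_state w i t) \<noteq> []"
    using length_Q1[of t] length_Q1[of "Suc t"] assms by auto
  ultimately show ?thesis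
    using hd_Q1[of t] by (auto simp: dequeued_Q1_def Q1_heavier_def split: prod.splits)
qed

lemma executed_while_Q1_pops_less:
  assumes "Q1_pops w i t < i"
  shows "executed w i t"
proof -
  have "m = 0" if "m < t" and "becomes_head0 w i m" for m
  proof -
    have Q1_Suc: "fst (bal_state w i (Suc m)) \<noteq> []" "hd (fst (bal_state w i (Suc m))) = 0"
      and Q1_before: "fst (bal_state w i m) = [] \<or> hd (fst (bal_state w i m)) \<noteq> 0"
      using \<open>becomes_head0 w i m\<close> by (auto simp: becomes_head0_def Let_def)
    have "Q1_pops w i (Suc m) \<le> Q1_pops w i t"
      using mono_Q1_pops[of w i] \<open>m < t\<close> by (meson monoD Suc_leI)
    then have "Q1_pops w i (Suc m) < i" using assms by (rule order.strict_trans1)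
    with Q1_Suc hd_Q1[of "Suc m"] have "Q1_pops w i (Suc m) = 0" by simp
    then have "Q1_pops w i m = 0" by (simp split: if_splits)
    with Q1_before hd_Q1[of m] have "fst (bal_state w i m) = []" by (metis mod_0)
    with length_Q1[of m] \<open>Q1_pops w i m = 0\<close> show "m = 0" by simp
  qed
  then have "{m. m < t \<and> becomes_head0 w i m} \<subseteq> {0}" by blast
  then have "card {m. m < t \<and> becomes_head0 w i m} \<le> 1"
    using card_mono[of "{0::nat}"] by fastforce
  then show ?thesis by (simp add: executed_def)
qed

end

theorem lemma4:
  fixes w :: "nat \<Rightarrow> real" and i :: nat
  assumes "i \<ge> 2" and "\<And>j. j < i \<Longrightarrow> w j > 0"
  shows "\<forall>j<i. \<exists>t. executed w i t \<and> dequeued_Q1 w i t j"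
proof (intro allI impI)
  fix j assume "j < i"
  have "0 < i" using assms(1) by simp
  have "j < Q1_pops w i (i + 2 * Suc j)"
    using Q1_pops_lower_bound[of i w, OF \<open>0 < i\<close> assms(2), where n = "i + 2 * Suc j"] by simp
  then obtain t where "Q1_pops w i t = j" and "Q1_pops w i (Suc t) = Suc j"
    using nat_seq_crosses[of "Q1_pops w i" j] by fastforce
  moreover note dequeued_Q1_at_pop[of i w, OF \<open>0 < i\<close> assms(2), where t = t]
  moreover note executed_while_Q1_pops_less[of i w, OF \<open>0 < i\<close> assms(2), where t = t]
  ultimately show "\<exists>t. executed w i t \<and> dequeued_Q1 w i t j"
    using \<open>j < i\<close> by auto
qed

end
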